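(* Let $I\ge 2$, let $\mathcal F_I$ be a saturated fraction of the $I\times I$ design $[I]\times[I]$, and let $E_{I+1}\subseteq[I+1]\times[I+1]$ with $\mathcal F_I\cap E_{I+1}=\emptyset$. Set $\mathcal F_{I+1}=\mathcal F_I\cup E_{I+1}$, viewed as a fraction of $[I+1]\times[I+1]$. Then $\mathcal F_{I+1}$ is saturated if and only if $E_{I+1}$ consists of exactly two points, both lying in $\{(i,j)\in[I+1]\times[I+1]: i=I+1 \text{ or } j=I+1\}$, and the margins of $\mathcal F_{I+1}$ satisfy $m_{A,I+1}\ge 1$ and $m_{B,I+1}\ge 1$.
   Context: For a fraction $\mathcal F\subseteq[I]\times[J]$, its margins are $m_{A,i}=\#\{(d_1,d_2)\in\mathcal F: d_1=i\}$ and $m_{B,j}=\#\{(d_1,d_2)\in\mathcal F: d_2=j\}$. For $(i,j)\in[I]\times[J]$ let $r_{(i,j)}\in\mathbb R^{I+J-1}$ be the row vector $(1,a_1,\dots,a_{I-1},b_1,\dots,b_{J-1})$ with $a_s=1$ iff $s=i$ and $b_t=1$ iff $t=j$ (all other entries $0$); $X_{\mathcal F}$ is the matrix with rows $r_{(i,j)}$, $(i,j)\in\mathcal F$. $\mathcal F$ is saturated if $\#\mathcal F=I+J-1$ and $X_{\mathcal F}$ is non-singular. *)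

theory Defs
  imports "Jordan_Normal_Form.Determinant" "HOL-Library.Product_Lexorder"
begin

definition fraction :: "nat \<Rightarrow> nat \<Rightarrow> (nat \<times> nat) set \<Rightarrow> bool" where
  "fraction I J F \<longleftrightarrow> F \<subseteq> {1..I} \<times> {1..J}"

definition margA :: "(nat \<times> nat) set \<Rightarrow> nat \<Rightarrow> nat" where
  "margA F i = card {d \<in> F. fst d = i}"

definition margB :: "(nat \<times> nat) set \<Rightarrow> nat \<Rightarrow> nat" where
  "margB F j = card {d \<in> F. snd d = j}"

(* row vector r_(i,j) = (1, a_1..a_{I-1}, b_1..b_{J-1}) of length I+J-1,
   index 0 is the constant, index s (1 \<le> s \<le> I-1) is a_s,
   index I-1+t (1 \<le> t \<le> J-1) is b_t *)
definition design_row :: "nat \<Rightarrow> nat \<Rightarrow> nat \<times> nat \<Rightarrow> real vec" where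
  "design_row I J d = vec (I + J - 1) (\<lambda>k.
     if k = 0 then 1
     else if k \<le> I - 1 then (if k = fst d then 1 else 0)
     else (if k - (I - 1) = snd d then 1 else 0))"

(* X_F: rows r_(i,j), (i,j) \<in> F (listed in lexicographic order; row order
   does not affect non-singularity) *)
definition design_matrix :: "nat \<Rightarrow> nat \<Rightarrow> (nat \<times> nat) set \<Rightarrow> real mat" where
  "design_matrix I J F = mat_of_rows (I + J - 1) (map (design_row I J) (sorted_list_of_set F))"

definition saturated :: "nat \<Rightarrow> nat \<Rightarrow> (nat \<times> nat) set \<Rightarrow> bool" where
  "saturated I J F \<longleftrightarrow> fraction I J F \<and> card F = I + J - 1 \<and> det (design_matrix I J F) \<noteq> 0"

end

theory Submission
  imports Defs
begin

(* A parameter vector theta of length I+J-1 is the same thing as an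
   additive function (i,j) |-> u i + v j on the grid [I] x [J]: the row r_(i,j)
   pairs with theta to give a row effect of i plus a column effect of j, and every
   additive function arises this way.  Hence, for a fraction F with #F = I+J-1, the square matrix X_F is non-singular
   iff its kernel is trivial iff F is *rigid*: every additive function vanishing
   on F vanishes on the whole grid.  Non-singularity moreover makes F
   *interpolating*: every function on F is the restriction of an additive one.
   The theorem then becomes combinatorics of rigidity: rigidity forces every
   row and column to be hit (margins >= 1); an interpolating set cannot contain
   a point of a rigid subgrid outside the rigid subset (so E avoids [I] x [I]);
   and a rigid set stays rigid when a new row and a new column are attached by
   one point each, provided at least one of the two attaching points meets the
   old grid. *)

section \<open>Rigid and interpolating sets of design points\<close>

definition rigid :: "nat \<Rightarrow> nat \<Rightarrow> (nat \<times> nat) set \<Rightarrow> bool" where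
  "rigid I J F \<longleftrightarrow> (\<forall>u v :: nat \<Rightarrow> real. (\<forall>(i,j)\<in>F. u i + v j = 0) \<longrightarrow>
      (\<forall>i\<in>{1..I}. \<forall>j\<in>{1..J}. u i + v j = 0))"

definition interpolating :: "(nat \<times> nat) set \<Rightarrow> bool" where
  "interpolating G \<longleftrightarrow> (\<forall>g :: nat \<times> nat \<Rightarrow> real. \<exists>u v. \<forall>(i,j)\<in>G. u i + v j = g (i,j))"

lemma rigid_row_hit:
  assumes "rigid I J F" "i \<in> {1..I}" "J \<ge> 1"
  shows "\<exists>j. (i,j) \<in> F"
proof (rule ccontr)
  assume "\<nexists>j. (i,j) \<in> F"
  then have "\<forall>(a,b)\<in>F. (if a = i then 1 else 0) + (\<lambda>_. 0) b = (0::real)" by auto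
  with assms have "(if i = i then 1 else 0) + (\<lambda>_. 0) 1 = (0::real)"
    unfolding rigid_def by fastforce
  then show False by simp
qed

lemma rigid_col_hit:
  assumes "rigid I J F" "j \<in> {1..J}" "I \<ge> 1"
  shows "\<exists>i. (i,j) \<in> F"
proof (rule ccontr)
  assume "\<nexists>i. (i,j) \<in> F"
  then have "\<forall>(a,b)\<in>F. (\<lambda>_. 0) a + (if b = j then 1 else 0) = (0::real)" by auto
  with assms have "(\<lambda>_. 0) 1 + (if j = j then 1 else 0) = (0::real)"
    unfolding rigid_def by fastforce
  then show False by simp
qed

(* Inside an interpolating set, a rigid subset of a subgrid already contains every
   point of that subgrid: a function that is 1 at an extra point and 0 on F would
   be additive yet vanish on F. *)
lemma interpolating_rigid_subgrid:
  assumes "interpolating G" "F \<subseteq> G" "rigid I J F"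
  shows "G \<inter> ({1..I} \<times> {1..J}) \<subseteq> F"
proof
  fix d assume d: "d \<in> G \<inter> ({1..I} \<times> {1..J})"
  show "d \<in> F"
  proof (rule ccontr)
    assume "d \<notin> F"
    obtain u v where uv: "\<forall>(i,j)\<in>G. u i + v j = (if (i,j) = d then 1 else (0::real))"
      using spec[OF assms(1)[unfolded interpolating_def], of "\<lambda>x. if x = d then 1 else 0"]
      by auto
    then have "\<forall>(i,j)\<in>F. u i + v j = 0" using assms(2) \<open>d \<notin> F\<close> by fastforce
    then have "u (fst d) + v (snd d) = 0" using assms(3) d unfolding rigid_def by auto
    moreover have "u (fst d) + v (snd d) = 1" using uv d by (cases d) auto
    ultimately show False by simp
  qed
qed

lemma rigid_add_row:
  assumes "rigid I J F" "F \<subseteq> G" "I \<ge> 1" "(I+1, b) \<in> G" "b \<in> {1..J}"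
  shows "rigid (I+1) J G"
  unfolding rigid_def
proof (intro allI impI ballI)
  fix u v :: "nat \<Rightarrow> real" and i j
  assume zero: "\<forall>(i,j)\<in>G. u i + v j = 0" and i: "i \<in> {1..I+1}" and j: "j \<in> {1..J}"
  have old: "u i' + v j' = 0" if "i' \<in> {1..I}" "j' \<in> {1..J}" for i' j'
    using assms(1,2) zero that unfolding rigid_def by blast
  have new: "u (I+1) + v b = 0" using zero assms(4) by auto
  have "u (I+1) + v j = 0"
    using new old[OF _ j, of 1] old[OF _ assms(5), of 1] assms(3) by auto
  then show "u i + v j = 0" using old[OF _ j, of i] i by (cases "i = I+1") auto
qed

lemma rigid_add_col:
  assumes "rigid I J F" "F \<subseteq> G" "J \<ge> 1" "(c, J+1) \<in> G" "c \<in> {1..I}"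
  shows "rigid I (J+1) G"
  unfolding rigid_def
proof (intro allI impI ballI)
  fix u v :: "nat \<Rightarrow> real" and i j
  assume zero: "\<forall>(i,j)\<in>G. u i + v j = 0" and i: "i \<in> {1..I}" and j: "j \<in> {1..J+1}"
  have old: "u i' + v j' = 0" if "i' \<in> {1..I}" "j' \<in> {1..J}" for i' j'
    using assms(1,2) zero that unfolding rigid_def by blast
  have new: "u c + v (J+1) = 0" using zero assms(4) by auto
  have "u i + v (J+1) = 0"
    using new old[OF i, of 1] old[OF assms(5), of 1] assms(3) by auto
  then show "u i + v j = 0" using old[OF i, of j] j by (cases "j = J+1") auto
qed

lemma rigid_add_corner:
  assumes "rigid I J F" "F \<subseteq> G" "I \<ge> 1" "J \<ge> 1"
    and "(I+1, b) \<in> G" "b \<in> {1..J+1}" "(c, J+1) \<in> G" "c \<in> {1..I+1}"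
    and "b \<le> J \<or> c \<le> I"
  shows "rigid (I+1) (J+1) G"
proof (cases "b \<le> J")
  case True
  with assms have "rigid (I+1) J G" by (intro rigid_add_row[of I J F]) auto
  with assms show ?thesis by (intro rigid_add_col[of "I+1" J G]) auto
next
  case False
  with assms have "rigid I (J+1) G" by (intro rigid_add_col[of I J F]) auto
  with assms show ?thesis by (intro rigid_add_row[of I "J+1" G]) auto
qed

section \<open>The design matrix\<close>

definition row_effect :: "nat \<Rightarrow> real vec \<Rightarrow> nat \<Rightarrow> real" where
  "row_effect I \<theta> i = \<theta>$0 + (if i \<le> I - 1 then \<theta>$i else 0)"

definition col_effect :: "nat \<Rightarrow> nat \<Rightarrow> real vec \<Rightarrow> nat \<Rightarrow> real" where
  "col_effect I J \<theta> j = (if j \<le> J - 1 then \<theta>$(I-1+j) else 0)"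

lemma design_row_unit_vecs:
  assumes "I \<ge> 1" "J \<ge> 1" "i \<in> {1..I}" "j \<in> {1..J}"
  shows "design_row I J (i,j) = unit_vec (I+J-1) 0
     + (if i \<le> I - 1 then unit_vec (I+J-1) i else 0\<^sub>v (I+J-1))
     + (if j \<le> J - 1 then unit_vec (I+J-1) (I-1+j) else 0\<^sub>v (I+J-1))"
  using assms by (intro eq_vecI) (auto simp: design_row_def unit_vec_def)

lemma design_row_scalar_prod:
  assumes "I \<ge> 1" "J \<ge> 1" "i \<in> {1..I}" "j \<in> {1..J}" "\<theta> \<in> carrier_vec (I+J-1)"
  shows "design_row I J (i,j) \<bullet> \<theta> = row_effect I \<theta> i + col_effect I J \<theta> j"
proof -
  let ?n = "I+J-1"
  have "(if i \<le> I - 1 then unit_vec ?n i else 0\<^sub>v ?n) \<in> carrier_vec ?n"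
     "(if j \<le> J - 1 then unit_vec ?n (I-1+j) else 0\<^sub>v ?n) \<in> carrier_vec ?n" by auto
  then have "design_row I J (i,j) \<bullet> \<theta> = unit_vec ?n 0 \<bullet> \<theta>
     + (if i \<le> I - 1 then unit_vec ?n i else 0\<^sub>v ?n) \<bullet> \<theta>
     + (if j \<le> J - 1 then unit_vec ?n (I-1+j) else 0\<^sub>v ?n) \<bullet> \<theta>"
    unfolding design_row_unit_vecs[OF assms(1-4)]
    using assms(5) by (simp add: add_scalar_prod_distrib[of _ ?n])
  also have "\<dots> = row_effect I \<theta> i + col_effect I J \<theta> j"
    using assms by (auto simp: row_effect_def col_effect_def)
  finally show ?thesis .
qed

(* Conversely every additive function on the grid is evaluated by some parameter
   vector (the last row and column serve as reference levels). *)
lemma additive_function_parameter: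
  assumes "I \<ge> 1" "J \<ge> 1"
  obtains \<theta> where "\<theta> \<in> carrier_vec (I+J-1)"
    "\<And>i j. i \<in> {1..I} \<Longrightarrow> j \<in> {1..J} \<Longrightarrow> design_row I J (i,j) \<bullet> \<theta> = u i + v j"
proof
  let ?\<theta> = "vec (I+J-1) (\<lambda>k. if k = 0 then u I + v J
       else if k \<le> I-1 then u k - u I else v (k-(I-1)) - v J) :: real vec"
  show \<theta>: "?\<theta> \<in> carrier_vec (I+J-1)" by simp
  fix i j assume "i \<in> {1..I}" "j \<in> {1..J}"
  with assms show "design_row I J (i,j) \<bullet> ?\<theta> = u i + v j"
    by (subst design_row_scalar_prod[OF assms _ _ \<theta>]; cases "i = I"; cases "j = J")
       (auto simp: row_effect_def col_effect_def)
qed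

lemma fraction_finite: "fraction I J F \<Longrightarrow> finite F"
  unfolding fraction_def by (rule finite_subset) auto

lemma design_row_scalar_prod_fraction:
  assumes "I \<ge> 1" "J \<ge> 1" "fraction I J F" "d \<in> F" "\<theta> \<in> carrier_vec (I+J-1)"
  shows "design_row I J d \<bullet> \<theta> = row_effect I \<theta> (fst d) + col_effect I J \<theta> (snd d)"
proof -
  have "fst d \<in> {1..I}" "snd d \<in> {1..J}" using assms(3,4) unfolding fraction_def by auto
  from design_row_scalar_prod[OF assms(1,2) this assms(5)] show ?thesis by simp
qed

lemma design_matrix_basics:
  assumes "fraction I J F" "card F = I+J-1"
  defines "L \<equiv> sorted_list_of_set F"
  shows "design_matrix I J F \<in> carrier_mat (I+J-1) (I+J-1)"
    and "\<And>k \<theta>. k < I+J-1 \<Longrightarrow> (design_matrix I J F *\<^sub>v \<theta>) $ k = design_row I J (L ! k) \<bullet> \<theta>"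
    and "set L = F" "length L = I+J-1"
proof -
  show L: "set L = F" "length L = I+J-1"
    using assms fraction_finite[OF assms(1)] by auto
  then show "design_matrix I J F \<in> carrier_mat (I+J-1) (I+J-1)"
    unfolding design_matrix_def L_def by (metis length_map mat_of_rows_carrier(1))
  show "\<And>k \<theta>. k < I+J-1 \<Longrightarrow> (design_matrix I J F *\<^sub>v \<theta>) $ k = design_row I J (L ! k) \<bullet> \<theta>"
    unfolding design_matrix_def L_def using L(2) by (simp add: L_def design_row_def)
qed

lemma design_matrix_kernel:
  assumes "fraction I J F" "card F = I+J-1"
  shows "design_matrix I J F *\<^sub>v \<theta> = 0\<^sub>v (I+J-1) \<longleftrightarrow> (\<forall>d\<in>F. design_row I J d \<bullet> \<theta> = 0)"
proof -
  note dm = design_matrix_basics[OF assms]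
  have "design_matrix I J F *\<^sub>v \<theta> = 0\<^sub>v (I+J-1)
        \<longleftrightarrow> (\<forall>k < I+J-1. (design_matrix I J F *\<^sub>v \<theta>) $ k = 0)"
    using dm(1) by (auto simp: vec_eq_iff simp del: index_mult_mat_vec)
  also have "\<dots> \<longleftrightarrow> (\<forall>k < I+J-1. design_row I J (sorted_list_of_set F ! k) \<bullet> \<theta> = 0)"
    using dm(2) by simp
  also have "\<dots> \<longleftrightarrow> (\<forall>d\<in>set (sorted_list_of_set F). design_row I J d \<bullet> \<theta> = 0)"
    using dm(4) by (metis in_set_conv_nth)
  finally show ?thesis using dm(3) by simp
qed

lemma det_nonzero_iff_rigid:
  assumes "I \<ge> 1" "J \<ge> 1" "fraction I J F" "card F = I+J-1"
  shows "det (design_matrix I J F) \<noteq> 0 \<longleftrightarrow> rigid I J F"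
proof -
  let ?n = "I+J-1"
  have grid: "\<And>d. d \<in> F \<Longrightarrow> fst d \<in> {1..I} \<and> snd d \<in> {1..J}"
    using assms(3) unfolding fraction_def by auto
  have det_iff: "det (design_matrix I J F) \<noteq> 0 \<longleftrightarrow>
      (\<forall>\<theta>\<in>carrier_vec ?n. (\<forall>d\<in>F. design_row I J d \<bullet> \<theta> = 0) \<longrightarrow> \<theta> = 0\<^sub>v ?n)"
    using det_0_iff_vec_prod_zero[OF design_matrix_basics(1)[OF assms(3,4)]]
      design_matrix_kernel[OF assms(3,4)] by blast
  show ?thesis
  proof
    assume det: "det (design_matrix I J F) \<noteq> 0"
    show "rigid I J F" unfolding rigid_def
    proof (intro allI impI ballI)
      fix u v :: "nat \<Rightarrow> real" and i j
      assume zero: "\<forall>(i,j)\<in>F. u i + v j = 0" and ij: "i \<in> {1..I}" "j \<in> {1..J}"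
      obtain \<theta> where \<theta>: "\<theta> \<in> carrier_vec ?n"
        and eval: "\<And>i j. i \<in> {1..I} \<Longrightarrow> j \<in> {1..J} \<Longrightarrow> design_row I J (i,j) \<bullet> \<theta> = u i + v j"
        using additive_function_parameter[OF assms(1,2)] by blast
      have "\<forall>d\<in>F. design_row I J d \<bullet> \<theta> = 0"
        using zero eval grid by fastforce
      then have "\<theta> = 0\<^sub>v ?n" using det det_iff \<theta> by blast
      then show "u i + v j = 0" using eval[OF ij] by (simp add: design_row_def)
    qed
  next
    assume rigid: "rigid I J F"
    show "det (design_matrix I J F) \<noteq> 0" unfolding det_iff
    proof (intro ballI impI)
      fix \<theta> :: "real vec"
      assume \<theta>: "\<theta> \<in> carrier_vec ?n" and zero: "\<forall>d\<in>F. design_row I J d \<bullet> \<theta> = 0"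
      have "\<forall>(i,j)\<in>F. row_effect I \<theta> i + col_effect I J \<theta> j = 0"
        using zero design_row_scalar_prod_fraction[OF assms(1-3) _ \<theta>] by fastforce
      then have all: "\<And>i j. i \<in> {1..I} \<Longrightarrow> j \<in> {1..J} \<Longrightarrow>
          row_effect I \<theta> i + col_effect I J \<theta> j = 0"
        using rigid unfolding rigid_def by blast
      have last: "\<not> I \<le> I - 1" "\<not> J \<le> J - 1" using assms(1,2) by auto
      have base: "\<theta>$0 = 0"
        using all[of I J] assms(1,2) last by (simp add: row_effect_def col_effect_def)
      show "\<theta> = 0\<^sub>v ?n"
      proof (rule eq_vecI)
        fix k assume "k < dim_vec (0\<^sub>v ?n)"
        then have k: "k < ?n" by simp
        consider "k = 0" | "k \<noteq> 0" "k \<le> I - 1" | "k > I - 1" by linarith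
        then show "\<theta> $ k = 0\<^sub>v ?n $ k"
        proof cases
          case 2
          then show ?thesis using all[of k J] base k assms(1,2) last
            by (simp add: row_effect_def col_effect_def)
        next
          case 3
          moreover have "k - (I-1) \<le> J - 1" "I - 1 + (k - (I-1)) = k" using 3 k by auto
          ultimately show ?thesis using all[of I "k-(I-1)"] base k assms(1,2) last
            by (simp add: row_effect_def col_effect_def)
        qed (use base k in simp)
      qed (use \<theta> in simp)
    qed
  qed
qed

lemma det_nonzero_interpolating:
  assumes "I \<ge> 1" "J \<ge> 1" "fraction I J F" "card F = I+J-1"
    and "det (design_matrix I J F) \<noteq> 0"
  shows "interpolating F"
  unfolding interpolating_def
proof
  fix g :: "nat \<times> nat \<Rightarrow> real"
  let ?n = "I+J-1"
  let ?M = "design_matrix I J F"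
  let ?L = "sorted_list_of_set F"
  note dm = design_matrix_basics[OF assms(3,4)]
  obtain B where B: "B \<in> carrier_mat ?n ?n" and MB: "?M * B = 1\<^sub>m ?n"
    using det_non_zero_imp_unit[OF dm(1) assms(5), of "()"]
    unfolding Units_def ring_mat_def by auto
  define y where "y = vec ?n (\<lambda>k. g (?L ! k))"
  define \<theta> where "\<theta> = B *\<^sub>v y"
  have \<theta>: "\<theta> \<in> carrier_vec ?n" unfolding \<theta>_def y_def using B by simp
  have y: "y \<in> carrier_vec ?n" unfolding y_def by simp
  have solve: "?M *\<^sub>v \<theta> = y"
    unfolding \<theta>_def using assoc_mult_mat_vec[OF dm(1) B y] MB y by simp
  have fit: "design_row I J d \<bullet> \<theta> = g d" if "d \<in> F" for d
  proof -
    have "d \<in> set ?L" using that dm(3) by simp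
    then obtain k where k: "k < ?n" "?L ! k = d" using dm(4) by (auto simp: in_set_conv_nth)
    have "design_row I J d \<bullet> \<theta> = (?M *\<^sub>v \<theta>) $ k" using dm(2)[OF k(1)] k(2) by simp
    also have "\<dots> = g d" unfolding solve y_def using k by simp
    finally show ?thesis .
  qed
  have "\<forall>(i,j)\<in>F. row_effect I \<theta> i + col_effect I J \<theta> j = g (i,j)"
    using fit design_row_scalar_prod_fraction[OF assms(1-3) _ \<theta>] by fastforce
  then show "\<exists>u v. \<forall>(i,j)\<in>F. u i + v j = g (i,j)" by blast
qed

section \<open>Saturated fractions\<close>

lemma saturated_iff_rigid:
  assumes "I \<ge> 1" "J \<ge> 1"
  shows "saturated I J F \<longleftrightarrow> fraction I J F \<and> card F = I+J-1 \<and> rigid I J F"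
  using det_nonzero_iff_rigid[OF assms] unfolding saturated_def by blast

lemma saturated_interpolating:
  assumes "I \<ge> 1" "J \<ge> 1" "saturated I J F"
  shows "interpolating F"
  using assms det_nonzero_interpolating unfolding saturated_def by blast

lemma margA_pos_iff: "finite F \<Longrightarrow> margA F i \<ge> 1 \<longleftrightarrow> (\<exists>j. (i,j) \<in> F)"
  unfolding margA_def by (auto simp: Suc_le_eq card_gt_0_iff)

lemma margB_pos_iff: "finite F \<Longrightarrow> margB F j \<ge> 1 \<longleftrightarrow> (\<exists>i. (i,j) \<in> F)"
  unfolding margB_def by (auto simp: Suc_le_eq card_gt_0_iff)

(* Two points on the new row/column lines that meet both the new row and the new
   column cannot both be the corner, so one of them meets the old grid. *)
lemma two_points_attach:
  fixes I :: nat and E :: "(nat \<times> nat) set"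
  assumes "card E = 2" "(I+1, b) \<in> E" "(c, I+1) \<in> E"
    and "\<forall>(i,j)\<in>E. i = I+1 \<or> j = I+1" "E \<subseteq> {1..I+1} \<times> {1..I+1}"
  obtains b' c' where "(I+1, b') \<in> E" "(c', I+1) \<in> E" "b' \<le> I \<or> c' \<le> I"
proof -
  have "\<not> E \<subseteq> {(I+1, I+1)}"
  proof
    assume "E \<subseteq> {(I+1, I+1)}"
    then have "card E \<le> 1" using card_mono[of "{(I+1, I+1)}" E] by simp
    with assms(1) show False by simp
  qed
  then obtain p q where pq: "(p,q) \<in> E" "(p,q) \<noteq> (I+1, I+1)" by auto
  have "p \<le> I+1" "q \<le> I+1" "p = I+1 \<or> q = I+1" using pq(1) assms(4,5) by auto
  then have "p = I+1 \<and> q \<le> I \<or> q = I+1 \<and> p \<le> I" using pq(2) by auto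
  then show ?thesis using that pq(1) assms(2,3) by blast
qed

theorem lemma4p4:
  fixes I :: nat and F E :: "(nat \<times> nat) set"
  assumes "I \<ge> 2"
    and "saturated I I F"
    and "E \<subseteq> {1..I+1} \<times> {1..I+1}"
    and "F \<inter> E = {}"
  shows "saturated (I+1) (I+1) (F \<union> E) \<longleftrightarrow>
           (card E = 2 \<and> (\<forall>(i,j)\<in>E. i = I+1 \<or> j = I+1) \<and>
            margA (F \<union> E) (I+1) \<ge> 1 \<and> margB (F \<union> E) (I+1) \<ge> 1)"
proof -
  have I: "I \<ge> 1" "I+1 \<ge> 1" using assms(1) by auto
  have F: "fraction I I F" "card F = I+I-1" "rigid I I F"
    using assms(2) saturated_iff_rigid[OF I(1) I(1)] by auto
  have F_grid: "F \<subseteq> {1..I} \<times> {1..I}" using F(1) unfolding fraction_def .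
  have finite: "finite F" "finite E" "finite (F \<union> E)"
    using F(1) fraction_finite finite_subset[OF assms(3)] by auto
  have card_union: "card (F \<union> E) = card F + card E"
    using card_Un_disjoint[OF finite(1,2) assms(4)] .
  have fraction: "fraction (I+1) (I+1) (F \<union> E)"
    using F_grid assms(3) unfolding fraction_def by auto
  have new_row: "(\<exists>j. (I+1, j) \<in> F \<union> E) \<longleftrightarrow> (\<exists>j. (I+1, j) \<in> E)"
    and new_col: "(\<exists>i. (i, I+1) \<in> F \<union> E) \<longleftrightarrow> (\<exists>i. (i, I+1) \<in> E)"
    using F_grid by auto
  show ?thesis
  proof
    assume "saturated (I+1) (I+1) (F \<union> E)"
    then have card: "card (F \<union> E) = (I+1)+(I+1)-1" and rigid: "rigid (I+1) (I+1) (F \<union> E)"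
      and interpolating: "interpolating (F \<union> E)"
      using saturated_iff_rigid[OF I(2) I(2)] saturated_interpolating[OF I(2) I(2)] by auto
    have card_E: "card E = 2" using card card_union F(2) I by simp
    have old: "(F \<union> E) \<inter> ({1..I} \<times> {1..I}) \<subseteq> F"
      using interpolating_rigid_subgrid[OF interpolating _ F(3)] by blast
    have lines: "\<forall>(i,j)\<in>E. i = I+1 \<or> j = I+1"
    proof (clarify)
      fix i j assume ij: "(i,j) \<in> E" "j \<noteq> I+1"
      then have "(i,j) \<notin> {1..I} \<times> {1..I}" using old assms(4) by blast
      with ij assms(3) show "i = I+1" by auto
    qed
    have "margA (F \<union> E) (I+1) \<ge> 1" "margB (F \<union> E) (I+1) \<ge> 1"
      using rigid_row_hit[OF rigid, of "I+1"] rigid_col_hit[OF rigid, of "I+1"] I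
        margA_pos_iff[OF finite(3)] margB_pos_iff[OF finite(3)] by auto
    with card_E lines show "card E = 2 \<and> (\<forall>(i,j)\<in>E. i = I+1 \<or> j = I+1) \<and>
        margA (F \<union> E) (I+1) \<ge> 1 \<and> margB (F \<union> E) (I+1) \<ge> 1" by blast
  next
    assume "card E = 2 \<and> (\<forall>(i,j)\<in>E. i = I+1 \<or> j = I+1) \<and>
        margA (F \<union> E) (I+1) \<ge> 1 \<and> margB (F \<union> E) (I+1) \<ge> 1"
    then have card_E: "card E = 2" and lines: "\<forall>(i,j)\<in>E. i = I+1 \<or> j = I+1"
      and "\<exists>b. (I+1, b) \<in> E" "\<exists>c. (c, I+1) \<in> E"
      using new_row new_col margA_pos_iff[OF finite(3)] margB_pos_iff[OF finite(3)] by blast+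
    then obtain b c where b: "(I+1, b) \<in> E" and c: "(c, I+1) \<in> E" by blast
    obtain b' c' where "(I+1, b') \<in> E" "(c', I+1) \<in> E" "b' \<le> I \<or> c' \<le> I"
      using two_points_attach[OF card_E b c lines assms(3)] .
    moreover have "b' \<in> {1..I+1}" "c' \<in> {1..I+1}" using calculation(1,2) assms(3) by auto
    ultimately have "rigid (I+1) (I+1) (F \<union> E)"
      using rigid_add_corner[OF F(3), of "F \<union> E" b' c'] I by simp
    moreover have "card (F \<union> E) = (I+1)+(I+1)-1" using card_union F(2) card_E I by simp
    ultimately show "saturated (I+1) (I+1) (F \<union> E)"
      using saturated_iff_rigid[OF I(2) I(2)] fraction by blast
  qed
qed

end
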